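(* For every integer $r_3\geq 0$ there exists an integer $r_2^*\geq 0$ such that (1) for every integer $r_2\geq r_2^*$ there exists a graph with parameters $(r_2,r_3)$, and (2) for every integer $0\le r_2<r_2^*$ there exists no graph with parameters $(r_2,r_3)$.
   Context: All graphs are finite, simple and undirected. The $K_3$-degree of a vertex $v$ is the number of triangles containing $v$. A graph $G$ has parameters $(r_2,r_3)$ if every vertex has degree $r_2$ and every vertex has $K_3$-degree $r_3$. *)

theory Defs
  imports Main
begin

text \<open>A finite simple undirected graph with vertex set V (vertices are natural numbers,
  which is no loss of generality up to isomorphism) and a symmetric irreflexive
  adjacency relation E supported on V.\<close>
definition simple_graph :: "nat set \<Rightarrow> (nat \<Rightarrow> nat \<Rightarrow> bool) \<Rightarrow> bool" where
  "simple_graph V E \<longleftrightarrow> finite V \<and> (\<forall>u v. E u v \<longrightarrow> u \<in> V \<and> v \<in> V)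
     \<and> (\<forall>u v. E u v \<longrightarrow> E v u) \<and> (\<forall>v. \<not> E v v)"

definition degree :: "nat set \<Rightarrow> (nat \<Rightarrow> nat \<Rightarrow> bool) \<Rightarrow> nat \<Rightarrow> nat" where
  "degree V E v = card {u \<in> V. E v u}"

definition triangles :: "nat set \<Rightarrow> (nat \<Rightarrow> nat \<Rightarrow> bool) \<Rightarrow> nat set set" where
  "triangles V E = {T. T \<subseteq> V \<and> card T = 3 \<and> (\<forall>x\<in>T. \<forall>y\<in>T. x \<noteq> y \<longrightarrow> E x y)}"

definition k3_degree :: "nat set \<Rightarrow> (nat \<Rightarrow> nat \<Rightarrow> bool) \<Rightarrow> nat \<Rightarrow> nat" where
  "k3_degree V E v = card {T \<in> triangles V E. v \<in> T}"

definition has_parameters :: "nat set \<Rightarrow> (nat \<Rightarrow> nat \<Rightarrow> bool) \<Rightarrow> nat \<Rightarrow> nat \<Rightarrow> bool" where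
  "has_parameters V E r2 r3 \<longleftrightarrow> simple_graph V E \<and> V \<noteq> {} \<and>
     (\<forall>v\<in>V. degree V E v = r2 \<and> k3_degree V E v = r3)"

end

theory Submission
  imports Defs "HOL-Library.Countable"
begin

text \<open>The Cartesian product \<open>G \<box> H\<close> joins \<open>(u, x)\<close> and \<open>(v, y)\<close> when one coordinate
  agrees and the other one is an edge. Every edge changes exactly one coordinate, so three
  pairwise adjacent vertices lie in a single fibre \<open>G \<times> {x}\<close> or \<open>{u} \<times> H\<close>; hence degrees and
  \<open>K\<^sub>3\<close>-degrees add: \<open>G \<box> H\<close> has parameters \<open>(r\<^sub>2 + r\<^sub>2', r\<^sub>3 + r\<^sub>3')\<close>. The complete graph
  \<open>K\<^sub>2\<close> has parameters \<open>(1, 0)\<close> and \<open>K\<^sub>3\<close> has \<open>(2, 1)\<close>, so for fixed \<open>r\<^sub>3\<close> the set of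
  realisable \<open>r\<^sub>2\<close> contains \<open>2 r\<^sub>3 + 1\<close> and is closed under successor; \<open>r\<^sub>2\<^sup>*\<close> is its least
  element.\<close>

text \<open>The notions of Defs for an arbitrary vertex type, since the product graph has pairs
  as vertices.\<close>

definition is_graph :: "'a set \<Rightarrow> ('a \<Rightarrow> 'a \<Rightarrow> bool) \<Rightarrow> bool" where
  "is_graph V E \<longleftrightarrow> finite V \<and> (\<forall>u v. E u v \<longrightarrow> u \<in> V \<and> v \<in> V)
     \<and> (\<forall>u v. E u v \<longrightarrow> E v u) \<and> (\<forall>v. \<not> E v v)"

definition neighbours :: "'a set \<Rightarrow> ('a \<Rightarrow> 'a \<Rightarrow> bool) \<Rightarrow> 'a \<Rightarrow> 'a set" where
  "neighbours V E v = {u \<in> V. E v u}"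

definition graph_triangles :: "'a set \<Rightarrow> ('a \<Rightarrow> 'a \<Rightarrow> bool) \<Rightarrow> 'a set set" where
  "graph_triangles V E = {T. T \<subseteq> V \<and> card T = 3 \<and> (\<forall>x\<in>T. \<forall>y\<in>T. x \<noteq> y \<longrightarrow> E x y)}"

definition triangles_at :: "'a set \<Rightarrow> ('a \<Rightarrow> 'a \<Rightarrow> bool) \<Rightarrow> 'a \<Rightarrow> 'a set set" where
  "triangles_at V E v = {T \<in> graph_triangles V E. v \<in> T}"

definition graph_params :: "'a set \<Rightarrow> ('a \<Rightarrow> 'a \<Rightarrow> bool) \<Rightarrow> nat \<Rightarrow> nat \<Rightarrow> bool" where
  "graph_params V E r2 r3 \<longleftrightarrow> is_graph V E \<and> V \<noteq> {} \<and>
     (\<forall>v\<in>V. card (neighbours V E v) = r2 \<and> card (triangles_at V E v) = r3)"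

lemma has_parameters_iff_graph_params: "has_parameters V E r2 r3 \<longleftrightarrow> graph_params V E r2 r3"
  unfolding has_parameters_def graph_params_def simple_graph_def is_graph_def degree_def
    neighbours_def k3_degree_def triangles_def graph_triangles_def triangles_at_def
  by simp

lemma finite_triangles_at: "finite V \<Longrightarrow> finite (triangles_at V E v)"
  by (rule finite_subset[of _ "Pow V"]) (auto simp: triangles_at_def graph_triangles_def)

definition cart_prod_adj ::
    "'a set \<Rightarrow> 'b set \<Rightarrow> ('a \<Rightarrow> 'a \<Rightarrow> bool) \<Rightarrow> ('b \<Rightarrow> 'b \<Rightarrow> bool) \<Rightarrow> 'a \<times> 'b \<Rightarrow> 'a \<times> 'b \<Rightarrow> bool" where
  "cart_prod_adj V W E F p q \<longleftrightarrow> p \<in> V \<times> W \<and> q \<in> V \<times> W \<and>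
     ((fst p = fst q \<and> F (snd p) (snd q)) \<or> (snd p = snd q \<and> E (fst p) (fst q)))"

lemma is_graph_cart_prod:
  assumes "is_graph V E" "is_graph W F"
  shows "is_graph (V \<times> W) (cart_prod_adj V W E F)"
  using assms unfolding is_graph_def cart_prod_adj_def by auto

lemma neighbours_cart_prod:
  assumes "is_graph V E" "is_graph W F" "u \<in> V" "x \<in> W"
  shows "neighbours (V \<times> W) (cart_prod_adj V W E F) (u, x) =
    (\<lambda>v. (v, x)) ` neighbours V E u \<union> (\<lambda>y. (u, y)) ` neighbours W F x"
  using assms unfolding neighbours_def cart_prod_adj_def is_graph_def by auto

lemma cart_prod_clique_in_fibre:
  assumes "S \<subseteq> V \<times> W" "(u, x) \<in> S"
    and clique: "\<And>p q. p \<in> S \<Longrightarrow> q \<in> S \<Longrightarrow> p \<noteq> q \<Longrightarrow> cart_prod_adj V W E F p q"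
  shows "S \<subseteq> V \<times> {x} \<or> S \<subseteq> {u} \<times> W"
proof (cases "\<forall>p\<in>S. snd p = x")
  case True
  with \<open>S \<subseteq> V \<times> W\<close> show ?thesis by fastforce
next
  case False
  then obtain p where "p \<in> S" "snd p \<noteq> x" by auto
  then have "p \<noteq> (u, x)" by auto
  with clique[OF \<open>(u, x) \<in> S\<close> \<open>p \<in> S\<close>] \<open>snd p \<noteq> x\<close> have "fst p = u"
    unfolding cart_prod_adj_def by auto
  have "fst q = u" if "q \<in> S" for q
  proof (rule ccontr)
    assume "fst q \<noteq> u"
    then have "q \<noteq> (u, x)" by auto
    with clique[OF \<open>(u, x) \<in> S\<close> \<open>q \<in> S\<close>] \<open>fst q \<noteq> u\<close> have "snd q = x"
      unfolding cart_prod_adj_def by auto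
    with \<open>fst q \<noteq> u\<close> \<open>fst p = u\<close> \<open>snd p \<noteq> x\<close> clique[OF \<open>q \<in> S\<close> \<open>p \<in> S\<close>] show False
      unfolding cart_prod_adj_def by auto
  qed
  with \<open>S \<subseteq> V \<times> W\<close> show ?thesis by fastforce
qed

lemma times_singleton_in_triangles_cart_prod_iff:
  assumes "x \<in> W"
  shows "T \<times> {x} \<in> graph_triangles (V \<times> W) (cart_prod_adj V W E F) \<longleftrightarrow>
    T \<in> graph_triangles V E"
  using assms unfolding graph_triangles_def cart_prod_adj_def
  by (auto simp: card_cartesian_product)

lemma singleton_times_in_triangles_cart_prod_iff:
  assumes "u \<in> V"
  shows "{u} \<times> T \<in> graph_triangles (V \<times> W) (cart_prod_adj V W E F) \<longleftrightarrow>
    T \<in> graph_triangles W F"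
  using assms unfolding graph_triangles_def cart_prod_adj_def
  by (auto simp: card_cartesian_product_singleton)

lemma triangles_at_cart_prod:
  assumes "u \<in> V" "x \<in> W"
  shows "triangles_at (V \<times> W) (cart_prod_adj V W E F) (u, x) =
    (\<lambda>T. T \<times> {x}) ` triangles_at V E u \<union> (\<lambda>T. {u} \<times> T) ` triangles_at W F x"
    (is "?lhs = ?rhs")
proof
  show "?lhs \<subseteq> ?rhs"
  proof
    fix S assume S: "S \<in> ?lhs"
    then have "S \<subseteq> V \<times> {x} \<or> S \<subseteq> {u} \<times> W"
      by (intro cart_prod_clique_in_fibre) (auto simp: triangles_at_def graph_triangles_def)
    then show "S \<in> ?rhs"
    proof
      assume "S \<subseteq> V \<times> {x}"
      then have "S = fst ` S \<times> {x}" by force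
      moreover have "fst ` S \<in> triangles_at V E u"
        using S \<open>x \<in> W\<close> times_singleton_in_triangles_cart_prod_iff[of x W "fst ` S" V E F]
        by (subst (asm) \<open>S = fst ` S \<times> {x}\<close>) (force simp: triangles_at_def)
      ultimately show ?thesis by blast
    next
      assume "S \<subseteq> {u} \<times> W"
      then have "S = {u} \<times> snd ` S" by force
      moreover have "snd ` S \<in> triangles_at W F x"
        using S \<open>u \<in> V\<close> singleton_times_in_triangles_cart_prod_iff[of u V "snd ` S" W E F]
        by (subst (asm) \<open>S = {u} \<times> snd ` S\<close>) (force simp: triangles_at_def)
      ultimately show ?thesis by blast
    qed
  qed
  show "?rhs \<subseteq> ?lhs"
    using times_singleton_in_triangles_cart_prod_iff[OF \<open>x \<in> W\<close>, of _ V E F]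
      singleton_times_in_triangles_cart_prod_iff[OF \<open>u \<in> V\<close>, of _ W E F]
    by (auto simp: triangles_at_def)
qed

lemma card_neighbours_cart_prod:
  assumes "is_graph V E" "is_graph W F" "u \<in> V" "x \<in> W"
  shows "card (neighbours (V \<times> W) (cart_prod_adj V W E F) (u, x)) =
    card (neighbours V E u) + card (neighbours W F x)"
proof -
  have "finite V" "finite W" using assms by (simp_all add: is_graph_def)
  have "card ((\<lambda>v. (v, x)) ` neighbours V E u \<union> (\<lambda>y. (u, y)) ` neighbours W F x) =
      card ((\<lambda>v. (v, x)) ` neighbours V E u) + card ((\<lambda>y. (u, y)) ` neighbours W F x)"
    using \<open>finite V\<close> \<open>finite W\<close> \<open>is_graph V E\<close>
    by (intro card_Un_disjoint) (auto simp: neighbours_def is_graph_def)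
  then show ?thesis
    by (simp add: neighbours_cart_prod[OF assms] card_image inj_on_def)
qed

lemma card_triangles_at_cart_prod:
  assumes "finite V" "finite W" "u \<in> V" "x \<in> W"
  shows "card (triangles_at (V \<times> W) (cart_prod_adj V W E F) (u, x)) =
    card (triangles_at V E u) + card (triangles_at W F x)"
proof -
  have "(\<lambda>T. T \<times> {x}) ` triangles_at V E u \<inter> (\<lambda>T. {u} \<times> T) ` triangles_at W F x = {}"
  proof (rule ccontr)
    assume "\<not> ?thesis"
    then obtain T T' where "T \<in> triangles_at V E u" "T \<times> {x} = {u} \<times> T'" by blast
    then have "T \<subseteq> {u}" "card T = 3" by (auto simp: triangles_at_def graph_triangles_def)
    then show False using card_mono[of "{u}" T] by simp
  qed
  then have "card ((\<lambda>T. T \<times> {x}) ` triangles_at V E u \<union> (\<lambda>T. {u} \<times> T) ` triangles_at W F x) =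
      card ((\<lambda>T. T \<times> {x}) ` triangles_at V E u) + card ((\<lambda>T. {u} \<times> T) ` triangles_at W F x)"
    using assms by (intro card_Un_disjoint finite_imageI finite_triangles_at)
  then show ?thesis
    by (simp add: triangles_at_cart_prod[OF \<open>u \<in> V\<close> \<open>x \<in> W\<close>] card_image inj_on_def times_eq_iff)
qed

lemma graph_params_cart_prod:
  assumes G: "graph_params V E r2 r3" and H: "graph_params W F s2 s3"
  shows "graph_params (V \<times> W) (cart_prod_adj V W E F) (r2 + s2) (r3 + s3)"
  unfolding graph_params_def
proof (intro conjI ballI)
  have "is_graph V E" "is_graph W F" using G H by (simp_all add: graph_params_def)
  then show "is_graph (V \<times> W) (cart_prod_adj V W E F)" by (rule is_graph_cart_prod)
  show "V \<times> W \<noteq> {}" using G H by (simp add: graph_params_def)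
  fix p assume "p \<in> V \<times> W"
  then obtain u x where p: "p = (u, x)" and "u \<in> V" "x \<in> W" by blast
  have "finite V" "finite W" using \<open>is_graph V E\<close> \<open>is_graph W F\<close> by (simp_all add: is_graph_def)
  with G H \<open>u \<in> V\<close> \<open>x \<in> W\<close> \<open>is_graph V E\<close> \<open>is_graph W F\<close>
  show "card (neighbours (V \<times> W) (cart_prod_adj V W E F) p) = r2 + s2"
    and "card (triangles_at (V \<times> W) (cart_prod_adj V W E F) p) = r3 + s3"
    by (simp_all add: p card_neighbours_cart_prod card_triangles_at_cart_prod graph_params_def)
qed

definition complete_adj :: "'a set \<Rightarrow> 'a \<Rightarrow> 'a \<Rightarrow> bool" where
  "complete_adj A u v \<longleftrightarrow> u \<in> A \<and> v \<in> A \<and> u \<noteq> v"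

lemma triangles_at_complete:
  assumes "v \<in> A"
  shows "triangles_at A (complete_adj A) v = insert v ` {B. B \<subseteq> A - {v} \<and> card B = 2}"
proof (intro equalityI subsetI)
  fix T assume T: "T \<in> triangles_at A (complete_adj A) v"
  then have "finite T" "card T = 3" "v \<in> T" "T \<subseteq> A"
    by (auto simp: triangles_at_def graph_triangles_def intro: card_ge_0_finite)
  then have "T - {v} \<subseteq> A - {v} \<and> card (T - {v}) = 2" "T = insert v (T - {v})" by auto
  then show "T \<in> insert v ` {B. B \<subseteq> A - {v} \<and> card B = 2}" by blast
next
  fix T assume "T \<in> insert v ` {B. B \<subseteq> A - {v} \<and> card B = 2}"
  then obtain B where "T = insert v B" "B \<subseteq> A - {v}" "card B = 2" by blast
  moreover from this have "card (insert v B) = 3"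
    using card_ge_0_finite[of B] by (simp add: card_insert_if subset_Diff_insert)
  ultimately show "T \<in> triangles_at A (complete_adj A) v"
    using \<open>v \<in> A\<close> by (auto simp: triangles_at_def graph_triangles_def complete_adj_def)
qed

lemma graph_params_complete:
  assumes "finite A" "card A = Suc n"
  shows "graph_params A (complete_adj A) n (n choose 2)"
  unfolding graph_params_def
proof (intro conjI ballI)
  show "is_graph A (complete_adj A)"
    using \<open>finite A\<close> by (auto simp: is_graph_def complete_adj_def)
  show "A \<noteq> {}" using \<open>card A = Suc n\<close> by auto
  fix v assume "v \<in> A"
  have "card (A - {v}) = n" using assms \<open>v \<in> A\<close> by simp
  moreover have "neighbours A (complete_adj A) v = A - {v}"
    using \<open>v \<in> A\<close> by (auto simp: neighbours_def complete_adj_def)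
  ultimately show "card (neighbours A (complete_adj A) v) = n" by simp
  have "inj_on (insert v) {B. B \<subseteq> A - {v} \<and> card B = 2}"
    by (rule inj_onI) (metis Diff_insert_absorb Diff_iff insertI1 mem_Collect_eq subsetD)
  then show "card (triangles_at A (complete_adj A) v) = n choose 2"
    using \<open>card (A - {v}) = n\<close> \<open>finite A\<close>
    by (simp add: triangles_at_complete[OF \<open>v \<in> A\<close>] card_image n_subsets)
qed

definition relabel_adj :: "('a \<Rightarrow> 'b) \<Rightarrow> 'a set \<Rightarrow> ('a \<Rightarrow> 'a \<Rightarrow> bool) \<Rightarrow> 'b \<Rightarrow> 'b \<Rightarrow> bool" where
  "relabel_adj f V E a b \<longleftrightarrow> (\<exists>u\<in>V. \<exists>v\<in>V. a = f u \<and> b = f v \<and> E u v)"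

lemma relabel_adj_image:
  assumes "inj_on f V" "u \<in> V" "v \<in> V"
  shows "relabel_adj f V E (f u) (f v) \<longleftrightarrow> E u v"
  using assms unfolding relabel_adj_def inj_on_def by metis

lemma is_graph_relabel:
  assumes "is_graph V E" "inj_on f V"
  shows "is_graph (f ` V) (relabel_adj f V E)"
  unfolding is_graph_def
proof (intro conjI allI impI)
  show "finite (f ` V)" using \<open>is_graph V E\<close> by (simp add: is_graph_def)
  fix a b assume "relabel_adj f V E a b"
  then obtain u v where "u \<in> V" "v \<in> V" "a = f u" "b = f v" "E u v"
    by (auto simp: relabel_adj_def)
  with assms show "a \<in> f ` V" "b \<in> f ` V" "relabel_adj f V E b a"
    by (auto simp: relabel_adj_image is_graph_def)
next
  fix a show "\<not> relabel_adj f V E a a"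
    using assms unfolding relabel_adj_def is_graph_def inj_on_def by metis
qed

lemma image_in_graph_triangles_relabel_iff:
  assumes "inj_on f V" "T \<subseteq> V"
  shows "f ` T \<in> graph_triangles (f ` V) (relabel_adj f V E) \<longleftrightarrow> T \<in> graph_triangles V E"
proof -
  have "inj_on f T" using assms by (rule inj_on_subset)
  with assms show ?thesis
    unfolding graph_triangles_def
    by (auto simp: card_image relabel_adj_image inj_on_image_eq_iff subset_eq
        dest: inj_on_contraD)
qed

lemma triangles_at_relabel:
  assumes "inj_on f V" "v \<in> V"
  shows "triangles_at (f ` V) (relabel_adj f V E) (f v) = image f ` triangles_at V E v"
proof (intro equalityI subsetI)
  fix S assume S: "S \<in> triangles_at (f ` V) (relabel_adj f V E) (f v)"
  then have "S \<subseteq> f ` V" by (simp add: triangles_at_def graph_triangles_def)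
  then obtain T where "T \<subseteq> V" "S = f ` T" by (auto simp: subset_image_iff)
  with S assms show "S \<in> image f ` triangles_at V E v"
    by (auto simp: triangles_at_def image_in_graph_triangles_relabel_iff inj_on_image_mem_iff)
next
  fix S assume "S \<in> image f ` triangles_at V E v"
  then obtain T where "T \<in> triangles_at V E v" "S = f ` T" by blast
  moreover from this have "T \<subseteq> V" by (simp add: triangles_at_def graph_triangles_def)
  ultimately show "S \<in> triangles_at (f ` V) (relabel_adj f V E) (f v)"
    using assms by (auto simp: triangles_at_def image_in_graph_triangles_relabel_iff)
qed

lemma graph_params_relabel:
  assumes G: "graph_params V E r2 r3" and "inj_on f V"
  shows "graph_params (f ` V) (relabel_adj f V E) r2 r3"
  unfolding graph_params_def
proof (intro conjI ballI)
  show "is_graph (f ` V) (relabel_adj f V E)"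
    using G \<open>inj_on f V\<close> by (simp add: graph_params_def is_graph_relabel)
  show "f ` V \<noteq> {}" using G by (simp add: graph_params_def)
  fix w assume "w \<in> f ` V"
  then obtain v where w: "w = f v" and "v \<in> V" by blast
  have "neighbours (f ` V) (relabel_adj f V E) w = f ` neighbours V E v"
    using \<open>inj_on f V\<close> \<open>v \<in> V\<close> by (auto simp: w neighbours_def relabel_adj_image)
  moreover have "inj_on f (neighbours V E v)"
    using \<open>inj_on f V\<close> by (rule inj_on_subset) (simp add: neighbours_def)
  ultimately show "card (neighbours (f ` V) (relabel_adj f V E) w) = r2"
    using G \<open>v \<in> V\<close> by (simp add: card_image graph_params_def)
  have "inj_on (image f) (triangles_at V E v)"
    using inj_on_image_Pow[OF \<open>inj_on f V\<close>]
    by (rule inj_on_subset) (auto simp: triangles_at_def graph_triangles_def)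
  then show "card (triangles_at (f ` V) (relabel_adj f V E) w) = r3"
    using G \<open>v \<in> V\<close> \<open>inj_on f V\<close>
    by (simp add: w triangles_at_relabel card_image graph_params_def)
qed

lemma ex_has_parameters_if_graph_params:
  fixes V :: "'a :: countable set"
  assumes "graph_params V E r2 r3"
  shows "\<exists>V E. has_parameters V E r2 r3"
  using graph_params_relabel[OF assms, of to_nat]
  by (auto simp: has_parameters_iff_graph_params intro: inj_on_subset[OF inj_to_nat])

lemma ex_has_parameters_add:
  assumes "\<exists>V E. has_parameters V E r2 r3" "\<exists>W F. has_parameters W F s2 s3"
  shows "\<exists>V E. has_parameters V E (r2 + s2) (r3 + s3)"
proof -
  obtain V W :: "nat set" and E F where "graph_params V E r2 r3" "graph_params W F s2 s3"
    using assms unfolding has_parameters_iff_graph_params by blast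
  from graph_params_cart_prod[OF this] show ?thesis
    by (rule ex_has_parameters_if_graph_params)
qed

lemma ex_has_parameters_complete: "\<exists>V E. has_parameters V E n (n choose 2)"
  using graph_params_complete[of "{0..n}" n]
  by (auto simp: has_parameters_iff_graph_params)

lemma ex_has_parameters_Suc:
  assumes "\<exists>V E. has_parameters V E r2 r3"
  shows "\<exists>V E. has_parameters V E (Suc r2) r3"
  using ex_has_parameters_add[OF assms ex_has_parameters_complete[of 1]] by (simp add: choose_two)

lemma ex_has_parameters_odd: "\<exists>V E. has_parameters V E (2 * r3 + 1) r3"
proof (induction r3)
  case 0
  show ?case using ex_has_parameters_complete[of 1] by (simp add: choose_two)
next
  case (Suc r3)
  show ?case using ex_has_parameters_add[OF Suc ex_has_parameters_complete[of 2]] by simp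
qed

lemma upward_closed_nat_threshold:
  fixes P :: "nat \<Rightarrow> bool"
  assumes "P k" and Suc: "\<And>n. P n \<Longrightarrow> P (Suc n)"
  shows "\<exists>m. \<forall>n. P n \<longleftrightarrow> m \<le> n"
proof (intro exI allI iffI)
  fix n
  show "P n \<Longrightarrow> (LEAST n. P n) \<le> n" by (rule Least_le)
  assume "(LEAST n. P n) \<le> n"
  then show "P n"
  proof (induction rule: dec_induct)
    case base
    show ?case using \<open>P k\<close> by (rule LeastI)
  next
    case (step n)
    then show ?case by (simp add: Suc)
  qed
qed

theorem corollary4p3:
  fixes r3 :: nat
  shows "\<exists>r2s :: nat.
     (\<forall>r2 \<ge> r2s. \<exists>V E. has_parameters V E r2 r3) \<and>
     (\<forall>r2 < r2s. \<not> (\<exists>V E. has_parameters V E r2 r3))"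
proof -
  obtain r2s where "\<forall>r2. (\<exists>V E. has_parameters V E r2 r3) \<longleftrightarrow> r2s \<le> r2"
    using upward_closed_nat_threshold[of "\<lambda>r2. \<exists>V E. has_parameters V E r2 r3",
        OF ex_has_parameters_odd ex_has_parameters_Suc]
    by blast
  then show ?thesis by (auto simp: not_le)
qed

end
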